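(* Let $n\ge4$ be even, $p\ge n+1$ an integer, $c_1$ a positive integer, $a_k=pc_k$, $c_{k+1}=p^2c_k$, and let $T$, $I^{(k)}_i$ and $\lambda_j$ be as in the context. Then for every $k\ge0$: (1) $\lambda_1(I^{(k)}_3)=\lambda_1(I^{(k)}_5)=\cdots=\lambda_1(I^{(k)}_{n-1})$; (2) $\lambda_1(I^{(k)}_2)=\lambda_1(I^{(k)}_4)=\cdots=\lambda_1(I^{(k)}_{n-2})$; (3) for every odd $m$ with $3\le m\le n-1$: $\lambda_m(I^{(k)}_t)$ takes the same value for all odd $t\in\{3,\dots,n-1\}$ with $t\ne m$, and $\lambda_m(I^{(k)}_t)$ takes the same value for all even $t\in\{2,\dots,n-2\}$ with $t\ne m-1$.
   Context: $\pi$ is the permutation of $\{1,\dots,n\}$ with top row $1,2,\dots,n$ and bottom row $n,3,2,5,4,\dots,n-1,n-2,1$. Right Rauzy induction: step "0" when the rightmost domain (top) interval is longer, "1" when the rightmost image (bottom) interval is longer. For $a,c>0$, $\dot\gamma_{m,a}=1^{n-1-m}0^a10^2$, $\gamma_{a,c}=0\,\dot\gamma_{n-2,a}\cdots\dot\gamma_{2,a}\,1^{c(n-1)}$; its transition matrix $\Theta_{a,c}$ (old lengths $=\Theta_{a,c}\cdot$new lengths) has row $1=(1,c,\dots,c)$, row $n=(1,c+1,\dots,c+1)$, and for $1\le i\le(n-2)/2$: row $2i$ has $0$ in column 1, $2$ in columns $2i,2i+1$, $1$ in the other columns among $2,\dots,n$; row $2i+1$ has $a$ in column $2i$, $a+1$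 in column $2i+1$, $0$ elsewhere. $\Theta_k=\Theta_{a_k,c_k}$. $T$ is an IET of $[0,1)$ with permutation $\pi$ whose right Rauzy induction path is $\gamma_{a_1,c_1}\gamma_{a_2,c_2}\cdots$; $I^{(k)}$ is the interval on which the induced map lives after the first $k$ blocks and $I^{(k)}_1,\dots,I^{(k)}_n$ its exchanged subintervals ($I^{(0)}_i$ are the initial subintervals of $T$); lengths satisfy $\ell^{(k-1)}=\Theta_k\ell^{(k)}$. For $v\ge0$, $|v|$ is the sum of entries and $\overline v=v/|v|$. $\lambda_j$ denotes the $T$-invariant Borel probability measure such that for every $k\ge0$, $(\lambda_j(I^{(k)}_i))_i$ is a positive multiple of $\lim_{m\to\infty}\overline{\Theta_{k+1}\cdots\Theta_me_j}$. *)

theory Defs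
  imports "HOL-Probability.Probability"
begin

text \<open>Labels are 1..n.  A (labelled) permutation is a pair of lists (top row, bottom row):
  the top row is the order of the domain subintervals, the bottom row the order of the
  image subintervals.  Length vectors are functions nat => real (only labels 1..n matter).\<close>

definition pi0 :: "nat \<Rightarrow> nat list \<times> nat list" where
  "pi0 n = ([1..<n+1], n # concat (map (\<lambda>i. [2*i+1, 2*i]) [1..<n div 2]) @ [1])"

definition start :: "nat list \<Rightarrow> (nat \<Rightarrow> real) \<Rightarrow> nat \<Rightarrow> real" where
  "start xs l i = sum_list (map l (takeWhile (\<lambda>z. z \<noteq> i) xs))"

definition subint :: "nat list \<Rightarrow> (nat \<Rightarrow> real) \<Rightarrow> nat \<Rightarrow> real set" where
  "subint xs l i = {start xs l i ..< start xs l i + l i}"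

definition iet_map :: "nat list \<times> nat list \<Rightarrow> (nat \<Rightarrow> real) \<Rightarrow> real \<Rightarrow> real" where
  "iet_map p l x = (SOME y. \<exists>i\<in>set (fst p). x \<in> subint (fst p) l i \<and>
      y = x - start (fst p) l i + start (snd p) l i)"

definition ins_after :: "nat \<Rightarrow> nat \<Rightarrow> nat list \<Rightarrow> nat list" where
  "ins_after x y xs = takeWhile (\<lambda>z. z \<noteq> x) xs @ [x, y] @ tl (dropWhile (\<lambda>z. z \<noteq> x) xs)"

definition rauzy_type :: "(nat list \<times> nat list) \<times> (nat \<Rightarrow> real) \<Rightarrow> nat option" where
  "rauzy_type s = (let (t, b) = fst s; l = snd s in
     if l (last t) > l (last b) then Some 0
     else if l (last b) > l (last t) then Some 1 else None)"

definition rauzy_step ::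
  "(nat list \<times> nat list) \<times> (nat \<Rightarrow> real) \<Rightarrow> (nat list \<times> nat list) \<times> (nat \<Rightarrow> real)" where
  "rauzy_step s = (let (t, b) = fst s; l = snd s; \<alpha> = last t; \<beta> = last b in
     if l \<alpha> > l \<beta> then ((t, ins_after \<alpha> \<beta> (butlast b)), l(\<alpha> := l \<alpha> - l \<beta>))
     else if l \<beta> > l \<alpha> then ((ins_after \<beta> \<alpha> (butlast t), b), l(\<beta> := l \<beta> - l \<alpha>))
     else s)"

primrec rauzy_state ::
  "(nat list \<times> nat list) \<times> (nat \<Rightarrow> real) \<Rightarrow> nat \<Rightarrow> (nat list \<times> nat list) \<times> (nat \<Rightarrow> real)" where
  "rauzy_state s 0 = s"
| "rauzy_state s (Suc N) = rauzy_step (rauzy_state s N)"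

definition dgamma :: "nat \<Rightarrow> nat \<Rightarrow> nat \<Rightarrow> nat list" where
  "dgamma n m a = replicate (n - 1 - m) 1 @ replicate a 0 @ [1, 0, 0]"

definition gamma :: "nat \<Rightarrow> nat \<Rightarrow> nat \<Rightarrow> nat list" where
  "gamma n a c = 0 # concat (map (\<lambda>m. dgamma n m a) (rev (map (\<lambda>i. 2*i) [1..<n div 2])))
                   @ replicate (c * (n - 1)) 1"

definition blocks :: "nat \<Rightarrow> (nat \<Rightarrow> nat) \<Rightarrow> (nat \<Rightarrow> nat) \<Rightarrow> nat \<Rightarrow> nat list" where
  "blocks n a c k = concat (map (\<lambda>j. gamma n (a j) (c j)) [1..<k+1])"

definition Theta :: "nat \<Rightarrow> nat \<Rightarrow> nat \<Rightarrow> nat \<Rightarrow> nat \<Rightarrow> real" where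
  "Theta n a c i j =
    (if i = 1 then (if j = 1 then 1 else real c)
     else if i = n then (if j = 1 then 1 else real c + 1)
     else if even i then (if j = 1 then 0 else if j = i \<or> j = i + 1 then 2 else 1)
     else (if j = i - 1 then real a else if j = i then real a + 1 else 0))"

definition matmul :: "nat \<Rightarrow> (nat \<Rightarrow> nat \<Rightarrow> real) \<Rightarrow> (nat \<Rightarrow> nat \<Rightarrow> real) \<Rightarrow> nat \<Rightarrow> nat \<Rightarrow> real" where
  "matmul n A B i j = (\<Sum>l=1..n. A i l * B l j)"

primrec ThetaProd :: "nat \<Rightarrow> (nat \<Rightarrow> nat) \<Rightarrow> (nat \<Rightarrow> nat) \<Rightarrow> nat \<Rightarrow> nat \<Rightarrow> nat \<Rightarrow> nat \<Rightarrow> real" where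
  "ThetaProd n a c k 0 = (\<lambda>i j. if i = j then 1 else 0)"
| "ThetaProd n a c k (Suc d) = matmul n (ThetaProd n a c k d) (Theta n (a (k+d+1)) (c (k+d+1)))"

definition normcol :: "nat \<Rightarrow> (nat \<Rightarrow> nat) \<Rightarrow> (nat \<Rightarrow> nat) \<Rightarrow> nat \<Rightarrow> nat \<Rightarrow> nat \<Rightarrow> nat \<Rightarrow> real" where
  "normcol n a c k j d i = ThetaProd n a c k d i j / (\<Sum>r=1..n. ThetaProd n a c k d r j)"

end

theory Submission
  imports Defs
begin

(* Every Theta_{a,c} is invariant under the simultaneous permutation of rows and columns
   exchanging the label pairs (u, u+1) and (v, v+1), for even u, v in 2..n-2: such a
   permutation fixes 1 and n and respects parity and the pairing.  Hence so is every product
   Theta_{k+1}...Theta_{k+d}, and for j fixed by the permutation the normalised column for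
   e_j, its limit, and with it (lambda_j(I^(k)_i))_i are invariant.  Taking (u, v) to be
   (t-1, t'-1) for odd t, t', resp. (t, t') for even t, t', gives the claims. *)

definition matrix_invariant_under :: "nat \<Rightarrow> (nat \<Rightarrow> nat) \<Rightarrow> (nat \<Rightarrow> nat \<Rightarrow> real) \<Rightarrow> bool" where
  "matrix_invariant_under n \<sigma> A \<longleftrightarrow> (\<forall>i\<in>{1..n}. \<forall>j\<in>{1..n}. A (\<sigma> i) (\<sigma> j) = A i j)"

lemma matmul_invariant_under:
  assumes \<sigma>: "bij_betw \<sigma> {1..n} {1..n}"
    and A: "matrix_invariant_under n \<sigma> A" and B: "matrix_invariant_under n \<sigma> B"
  shows "matrix_invariant_under n \<sigma> (matmul n A B)"
  unfolding matrix_invariant_under_def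
proof (intro ballI)
  fix i j assume i: "i \<in> {1..n}" and j: "j \<in> {1..n}"
  have "matmul n A B (\<sigma> i) (\<sigma> j) = (\<Sum>l=1..n. A (\<sigma> i) (\<sigma> l) * B (\<sigma> l) (\<sigma> j))"
    unfolding matmul_def
    using sum.reindex_bij_betw[OF \<sigma>, of "\<lambda>l. A (\<sigma> i) l * B l (\<sigma> j)"] by simp
  also have "\<dots> = matmul n A B i j"
    unfolding matmul_def using A B i j by (simp add: matrix_invariant_under_def)
  finally show "matmul n A B (\<sigma> i) (\<sigma> j) = matmul n A B i j" .
qed

lemma ThetaProd_invariant_under:
  assumes \<sigma>: "bij_betw \<sigma> {1..n} {1..n}"
    and Theta: "\<And>m. matrix_invariant_under n \<sigma> (Theta n (a m) (c m))"
  shows "matrix_invariant_under n \<sigma> (ThetaProd n a c k d)"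
proof (induction d)
  case 0
  have "inj_on \<sigma> {1..n}" using \<sigma> by (rule bij_betw_imp_inj_on)
  then show ?case by (auto simp: matrix_invariant_under_def dest: inj_onD)
next
  case (Suc d)
  then show ?case by (simp add: matmul_invariant_under[OF \<sigma>] Theta)
qed

lemma normcol_invariant_under:
  assumes \<sigma>: "bij_betw \<sigma> {1..n} {1..n}"
    and P: "matrix_invariant_under n \<sigma> (ThetaProd n a c k d)"
    and j: "j \<in> {1..n}" "\<sigma> j = j" and i: "i \<in> {1..n}"
  shows "normcol n a c k j d (\<sigma> i) = normcol n a c k j d i"
proof -
  have P_col: "ThetaProd n a c k d (\<sigma> r) j = ThetaProd n a c k d r j" if "r \<in> {1..n}" for r
    using P j that unfolding matrix_invariant_under_def by metis
  have "(\<Sum>r=1..n. ThetaProd n a c k d r j) = (\<Sum>r=1..n. ThetaProd n a c k d (\<sigma> r) j)"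
    using sum.reindex_bij_betw[OF \<sigma>, of "\<lambda>r. ThetaProd n a c k d r j"] by simp
  also have "\<dots> = (\<Sum>r=1..n. ThetaProd n a c k d r j)"
    using P_col by simp
  finally show ?thesis
    using P_col[OF i] by (simp add: normcol_def)
qed

lemma measure_invariant_under:
  fixes \<mu> :: "real measure" and I :: "nat \<Rightarrow> real set"
  assumes \<sigma>: "bij_betw \<sigma> {1..n} {1..n}"
    and Theta: "\<And>m. matrix_invariant_under n \<sigma> (Theta n (a m) (c m))"
    and j: "j \<in> {1..n}" "\<sigma> j = j" and i: "i \<in> {1..n}"
    and lim: "\<forall>i\<in>{1..n}. (\<lambda>d. normcol n a c k j d i) \<longlonglongrightarrow> L i"
    and meas: "\<forall>i\<in>{1..n}. measure \<mu> (I i) = r * L i"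
  shows "measure \<mu> (I (\<sigma> i)) = measure \<mu> (I i)"
proof -
  have \<sigma>i: "\<sigma> i \<in> {1..n}" using \<sigma> i by (metis bij_betwE)
  have "(\<lambda>d. normcol n a c k j d (\<sigma> i)) = (\<lambda>d. normcol n a c k j d i)"
    using normcol_invariant_under[OF \<sigma> ThetaProd_invariant_under[OF \<sigma> Theta] j i] by simp
  then have "(\<lambda>d. normcol n a c k j d i) \<longlonglongrightarrow> L (\<sigma> i)"
    using lim \<sigma>i by metis
  then have "L (\<sigma> i) = L i"
    using lim i LIMSEQ_unique by blast
  then show ?thesis using meas i \<sigma>i by simp
qed

definition pair_swap :: "nat \<Rightarrow> nat \<Rightarrow> nat \<Rightarrow> nat" where
  "pair_swap u v x =
    (if x = u then v else if x = v then u
     else if x = u + 1 then v + 1 else if x = v + 1 then u + 1 else x)"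

lemma pair_swap_involution:
  "even u \<Longrightarrow> even v \<Longrightarrow> pair_swap u v (pair_swap u v x) = x"
  unfolding pair_swap_def by auto

lemma pair_swap_eq_iff:
  "even u \<Longrightarrow> even v \<Longrightarrow> pair_swap u v x = pair_swap u v y \<longleftrightarrow> x = y"
  by (metis pair_swap_involution)

lemma pair_swap_fixed:
  "x \<notin> {u, u + 1, v, v + 1} \<Longrightarrow> pair_swap u v x = x"
  unfolding pair_swap_def by auto

lemma even_pair_swap_iff:
  "even u \<Longrightarrow> even v \<Longrightarrow> even (pair_swap u v x) \<longleftrightarrow> even x"
  unfolding pair_swap_def by auto

lemma pair_swap_Suc:
  "even u \<Longrightarrow> even v \<Longrightarrow> even x \<Longrightarrow> pair_swap u v (x + 1) = pair_swap u v x + 1"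
  unfolding pair_swap_def by auto

lemma bij_betw_pair_swap:
  assumes "even u" "even v" "2 \<le> u" "2 \<le> v" "u + 2 \<le> n" "v + 2 \<le> n"
  shows "bij_betw (pair_swap u v) {1..n} {1..n}"
proof -
  have "pair_swap u v ` {1..n} \<subseteq> {1..n}"
    using assms unfolding image_subset_iff pair_swap_def by auto
  then show ?thesis
    by (intro bij_betw_byWitness[where f' = "pair_swap u v"]) (simp_all add: pair_swap_involution assms)
qed

lemma Theta_invariant_under_pair_swap:
  assumes "even n" "even u" "even v" "2 \<le> u" "2 \<le> v" "u + 2 \<le> n" "v + 2 \<le> n"
  shows "matrix_invariant_under n (pair_swap u v) (Theta n a' c')"
  unfolding matrix_invariant_under_def
proof (intro ballI)
  fix i j
  let ?\<sigma> = "pair_swap u v"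
  have "?\<sigma> 1 = 1" "?\<sigma> n = n"
    using assms by (auto intro: pair_swap_fixed)
  then have ends: "?\<sigma> x = 1 \<longleftrightarrow> x = 1" "?\<sigma> x = n \<longleftrightarrow> x = n" for x
    using pair_swap_eq_iff[OF assms(2,3)] by metis+
  have swap_eq: "?\<sigma> x = ?\<sigma> y \<longleftrightarrow> x = y" "even (?\<sigma> x) \<longleftrightarrow> even x" for x y
    using assms(2,3) by (simp_all add: pair_swap_eq_iff even_pair_swap_iff)
  show "Theta n a' c' (?\<sigma> i) (?\<sigma> j) = Theta n a' c' i j"
  proof (cases "even i")
    case True
    then have "?\<sigma> j = ?\<sigma> i + 1 \<longleftrightarrow> j = i + 1"
      using pair_swap_Suc[OF assms(2,3)] swap_eq by metis
    then show ?thesis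
      unfolding Theta_def by (simp only: ends swap_eq True if_True)
  next
    case False
    then have "even (i - 1)" "i = (i - 1) + 1" by (auto elim: oddE)
    then have "?\<sigma> i - 1 = ?\<sigma> (i - 1)"
      using pair_swap_Suc[OF assms(2,3)] by (metis add_diff_cancel_right')
    then have "?\<sigma> j = ?\<sigma> i - 1 \<longleftrightarrow> j = i - 1"
      using swap_eq by metis
    then show ?thesis
      unfolding Theta_def by (simp only: ends swap_eq False if_False)
  qed
qed

lemma measure_invariant_under_pair_swap:
  fixes \<mu> :: "real measure" and I :: "nat \<Rightarrow> real set"
  assumes lim: "\<forall>i\<in>{1..n}. (\<lambda>d. normcol n a c k j d i) \<longlonglongrightarrow> L i"
    and meas: "\<forall>i\<in>{1..n}. measure \<mu> (I i) = r * L i"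
    and uv: "even n" "even u" "even v" "2 \<le> u" "2 \<le> v" "u + 2 \<le> n" "v + 2 \<le> n"
    and j: "j \<in> {1..n}" "pair_swap u v j = j" and i: "i \<in> {1..n}"
  shows "measure \<mu> (I (pair_swap u v i)) = measure \<mu> (I i)"
  using measure_invariant_under[OF bij_betw_pair_swap Theta_invariant_under_pair_swap j i lim meas]
    uv by blast

lemma measure_eq_odd_labels:
  fixes \<mu> :: "real measure" and I :: "nat \<Rightarrow> real set"
  assumes "even n"
    and lim: "\<forall>i\<in>{1..n}. (\<lambda>d. normcol n a c k j d i) \<longlonglongrightarrow> L i"
    and meas: "\<forall>i\<in>{1..n}. measure \<mu> (I i) = r * L i"
    and j: "j \<in> {1..n}" "odd j" "j \<noteq> t" "j \<noteq> t'"
    and t: "t \<in> {3..n-1}" "t' \<in> {3..n-1}" "odd t" "odd t'"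
  shows "measure \<mu> (I t) = measure \<mu> (I t')"
proof -
  have "pair_swap (t - 1) (t' - 1) t = t'" "pair_swap (t - 1) (t' - 1) j = j"
    using j t by (auto simp: pair_swap_def)
  then show ?thesis
    using measure_invariant_under_pair_swap[OF lim meas, where u = "t - 1" and v = "t' - 1" and i = t]
      assms by auto
qed

lemma measure_eq_even_labels:
  fixes \<mu> :: "real measure" and I :: "nat \<Rightarrow> real set"
  assumes "even n"
    and lim: "\<forall>i\<in>{1..n}. (\<lambda>d. normcol n a c k j d i) \<longlonglongrightarrow> L i"
    and meas: "\<forall>i\<in>{1..n}. measure \<mu> (I i) = r * L i"
    and j: "j \<in> {1..n}" "odd j" "t \<noteq> j - 1" "t' \<noteq> j - 1"
    and t: "t \<in> {2..n-2}" "t' \<in> {2..n-2}" "even t" "even t'"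
  shows "measure \<mu> (I t) = measure \<mu> (I t')"
proof -
  have "pair_swap t t' t = t'" "pair_swap t t' j = j"
    using j t by (auto simp: pair_swap_def)
  then show ?thesis
    using measure_invariant_under_pair_swap[OF lim meas, where u = t and v = t' and i = t]
      assms by auto
qed

theorem mainTheorem7:
  fixes n p :: nat
    and a c :: "nat \<Rightarrow> nat"
    and l0 :: "nat \<Rightarrow> real"
    and T :: "real \<Rightarrow> real"
    and I :: "nat \<Rightarrow> nat \<Rightarrow> real set"
    and lam :: "nat \<Rightarrow> real measure"
  assumes n_even: "even n" and n_ge: "n \<ge> 4"
    and p_ge: "p \<ge> n + 1"
    and c1_pos: "c 1 > 0"
    and a_def: "\<And>k. k \<ge> 1 \<Longrightarrow> a k = p * c k"
    and c_rec: "\<And>k. k \<ge> 1 \<Longrightarrow> c (k + 1) = p^2 * c k"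
    and l0_pos: "\<And>i. i \<in> {1..n} \<Longrightarrow> l0 i > 0"
    and l0_sum: "(\<Sum>i=1..n. l0 i) = 1"
    and T_def: "\<And>x. x \<in> {0..<1} \<Longrightarrow> T x = iet_map (pi0 n) l0 x"
    and path: "\<And>K N. N < length (blocks n a c K) \<Longrightarrow>
                 rauzy_type (rauzy_state (pi0 n, l0) N) = Some (blocks n a c K ! N)"
    and I_def: "\<And>k i. I k i =
                 (let s = rauzy_state (pi0 n, l0) (length (blocks n a c k))
                  in subint (fst (fst s)) (snd s) i)"
    and lam_sets: "\<And>j. j \<in> {1..n} \<Longrightarrow> sets (lam j) = sets (restrict_space borel {0..<1::real})"
    and lam_prob: "\<And>j. j \<in> {1..n} \<Longrightarrow> prob_space (lam j)"
    and lam_meas: "\<And>j. j \<in> {1..n} \<Longrightarrow> T \<in> measurable (lam j) (lam j)"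
    and lam_inv: "\<And>j. j \<in> {1..n} \<Longrightarrow> distr (lam j) (lam j) T = lam j"
    and lam_char: "\<And>j k. j \<in> {1..n} \<Longrightarrow>
                 \<exists>L r. r > 0 \<and>
                   (\<forall>i\<in>{1..n}. (\<lambda>d. normcol n a c k j d i) \<longlonglongrightarrow> L i) \<and>
                   (\<forall>i\<in>{1..n}. measure (lam j) (I k i) = r * L i)"
  shows "\<forall>k.
     (\<forall>t\<in>{3..n-1}. \<forall>t'\<in>{3..n-1}. odd t \<and> odd t' \<longrightarrow>
         measure (lam 1) (I k t) = measure (lam 1) (I k t'))
   \<and> (\<forall>t\<in>{2..n-2}. \<forall>t'\<in>{2..n-2}. even t \<and> even t' \<longrightarrow>
         measure (lam 1) (I k t) = measure (lam 1) (I k t'))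
   \<and> (\<forall>m\<in>{3..n-1}. odd m \<longrightarrow>
        (\<forall>t\<in>{3..n-1}. \<forall>t'\<in>{3..n-1}. odd t \<and> odd t' \<and> t \<noteq> m \<and> t' \<noteq> m \<longrightarrow>
            measure (lam m) (I k t) = measure (lam m) (I k t'))
      \<and> (\<forall>t\<in>{2..n-2}. \<forall>t'\<in>{2..n-2}. even t \<and> even t' \<and> t \<noteq> m - 1 \<and> t' \<noteq> m - 1 \<longrightarrow>
            measure (lam m) (I k t) = measure (lam m) (I k t')))"
proof (intro allI conjI ballI impI)
  fix k
  have labels: "measure (lam j) (I k t) = measure (lam j) (I k t')"
    if j: "j \<in> {1..n}" "odd j"
      and labels: "t \<in> {3..n-1} \<and> t' \<in> {3..n-1} \<and> odd t \<and> odd t' \<and> j \<noteq> t \<and> j \<noteq> t' \<or>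
           t \<in> {2..n-2} \<and> t' \<in> {2..n-2} \<and> even t \<and> even t' \<and> t \<noteq> j - 1 \<and> t' \<noteq> j - 1"
    for j t t'
  proof -
    obtain L r where lim: "\<forall>i\<in>{1..n}. (\<lambda>d. normcol n a c k j d i) \<longlonglongrightarrow> L i"
      and meas: "\<forall>i\<in>{1..n}. measure (lam j) (I k i) = r * L i"
      using lam_char[OF j(1)] by blast
    show ?thesis
      using labels measure_eq_odd_labels[OF n_even lim meas j] measure_eq_even_labels[OF n_even lim meas j]
      by blast
  qed
  show "measure (lam 1) (I k t) = measure (lam 1) (I k t')"
    if "t \<in> {3..n-1}" "t' \<in> {3..n-1}" "odd t \<and> odd t'" for t t'
    using labels[of 1 t t'] that n_ge by auto
  show "measure (lam 1) (I k t) = measure (lam 1) (I k t')"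
    if "t \<in> {2..n-2}" "t' \<in> {2..n-2}" "even t \<and> even t'" for t t'
    using labels[of 1 t t'] that n_ge by auto
  show "measure (lam m) (I k t) = measure (lam m) (I k t')"
    if "m \<in> {3..n-1}" "odd m" "t \<in> {3..n-1}" "t' \<in> {3..n-1}"
      "odd t \<and> odd t' \<and> t \<noteq> m \<and> t' \<noteq> m" for m t t'
    using labels[of m t t'] that by auto
  show "measure (lam m) (I k t) = measure (lam m) (I k t')"
    if "m \<in> {3..n-1}" "odd m" "t \<in> {2..n-2}" "t' \<in> {2..n-2}"
      "even t \<and> even t' \<and> t \<noteq> m - 1 \<and> t' \<noteq> m - 1" for m t t'
    using labels[of m t t'] that by auto
qed

end
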